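(* Let $\nu\ge\frac12$. Then for all $x>0$, $$I_{\nu+1}^2(x)-I_\nu(x)I_{\nu+2}(x)<\frac{2\nu}{x}I_\nu(x)I_{\nu+1}(x).$$ Consequently, if $K>\nu+1$ and $r>0$ satisfies $r=\Psi_\nu(2Kr)$ with $\Psi_\nu(x)=I_{\nu+1}(x)/I_\nu(x)$, then $$r<\sqrt{1-\frac{1}{K}}.$$
   Context: $I_\nu$ denotes the modified Bessel function of the first kind of order $\nu$. *)

theory Defs
  imports "HOL-Analysis.Analysis"
begin

definition besselI :: "real \<Rightarrow> real \<Rightarrow> real" where
  "besselI \<nu> x = (\<Sum>k. (x / 2) powr (2 * real k + \<nu>) / (fact k * Gamma (real k + \<nu> + 1)))"

definition Psi :: "real \<Rightarrow> real \<Rightarrow> real" where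
  "Psi \<nu> x = besselI (\<nu> + 1) x / besselI \<nu> x"

end

theory Submission
  imports Defs
begin

text \<open>Write \<open>I\<^sub>\<mu>(x) = (x/2)\<^sup>\<mu> F\<^sub>\<mu>(x\<^sup>2/4)\<close> with \<open>F\<^sub>\<mu>(y) = \<Sum>\<^sub>k y\<^sup>k / (k! \<Gamma>(k+\<mu>+1))\<close>.
  Multiplying out the Cauchy products, \<open>\<nu> F\<^sub>\<nu> F\<^sub>\<nu>\<^sub>+\<^sub>1 - y (F\<^sub>\<nu>\<^sub>+\<^sub>1\<^sup>2 - F\<^sub>\<nu> F\<^sub>\<nu>\<^sub>+\<^sub>2)\<close> is a power
  series in \<open>y\<close> whose coefficients, by a Vandermonde convolution of Pochhammer symbols,
  are positive multiples of \<open>\<nu>(2n+2\<nu>+3) - (n+1)\<close>; these are nonnegative for \<open>\<nu> \<ge> 1/2\<close>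
  and the constant term is positive, which gives the Turan-type inequality.
  Together with the recurrence \<open>I\<^sub>\<nu> - I\<^sub>\<nu>\<^sub>+\<^sub>2 = 2(\<nu>+1)/x I\<^sub>\<nu>\<^sub>+\<^sub>1\<close> it becomes
  \<open>\<Psi>\<^sub>\<nu>(x)\<^sup>2 + 2 \<Psi>\<^sub>\<nu>(x)/x < 1\<close>, which at a fixed point \<open>r = \<Psi>\<^sub>\<nu>(2Kr)\<close> reads \<open>r\<^sup>2 + 1/K < 1\<close>.\<close>

lemma Gamma_plus1_real_pos: "(z::real) > 0 \<Longrightarrow> Gamma (z + 1) = z * Gamma z"
  by (rule Gamma_plus1) auto

lemma Gamma_add_of_nat_real:
  assumes "(z::real) > 0"
  shows "Gamma (z + real n) = Gamma z * pochhammer z n"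
proof -
  have "z \<notin> \<int>\<^sub>\<le>\<^sub>0" "Gamma z > 0"
    using assms by auto
  then show ?thesis
    by (simp add: pochhammer_Gamma)
qed

lemma pochhammer_binomial_sum_shifted:
  fixes a b :: real
  shows "(\<Sum>k\<le>n. of_nat (n choose k) * pochhammer (b + real n - real k) k * pochhammer (a + real k) (n - k))
        = pochhammer (a + b + real n - 1) n"
proof -
  have term_sign: "of_nat (n choose k) * pochhammer (-(b + real n - 1)) k * pochhammer (-(a + real n - 1)) (n - k)
      = (-1)^n * (of_nat (n choose k) * pochhammer (b + real n - real k) k * pochhammer (a + real k) (n - k))"
    if "k \<le> n" for k
  proof -
    have "pochhammer (-(b + real n - 1)) k = (-1)^k * pochhammer (b + real n - real k) k"
      by (subst pochhammer_minus) (simp add: algebra_simps)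
    moreover have "pochhammer (-(a + real n - 1)) (n-k) = (-1)^(n-k) * pochhammer (a + real k) (n-k)"
      using that by (subst pochhammer_minus) (simp add: algebra_simps)
    moreover have "(-1::real)^k * (-1)^(n-k) = (-1)^n"
      using that by (simp flip: power_add)
    ultimately show ?thesis by (simp add: algebra_simps)
  qed
  have "(-1)^n * pochhammer (a + b + real n - 1) n = pochhammer (-(b + real n - 1) + -(a + real n - 1)) n"
  proof -
    have "-(b + real n - 1) + -(a + real n - 1) = - (a + b + 2 * real n - 2)" by simp
    moreover have "a + b + 2 * real n - 2 - real n + 1 = a + b + real n - 1" by simp
    ultimately show ?thesis by (simp only: pochhammer_minus)
  qed
  also have "\<dots> = (\<Sum>k\<le>n. of_nat (n choose k) * pochhammer (-(b + real n - 1)) k * pochhammer (-(a + real n - 1)) (n - k))"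
    by (rule pochhammer_binomial_sum)
  also have "\<dots> = (-1)^n * (\<Sum>k\<le>n. of_nat (n choose k) * pochhammer (b + real n - real k) k * pochhammer (a + real k) (n - k))"
    unfolding sum_distrib_left by (intro sum.cong refl term_sign) simp
  finally show ?thesis by simp
qed

definition bessel_coeff :: "real \<Rightarrow> nat \<Rightarrow> real" where
  "bessel_coeff \<mu> k = 1 / (fact k * Gamma (real k + \<mu> + 1))"

definition bessel_series :: "real \<Rightarrow> real \<Rightarrow> real" where
  "bessel_series \<mu> y = (\<Sum>k. y^k * bessel_coeff \<mu> k)"

lemma bessel_coeff_pos: "\<mu> > -1 \<Longrightarrow> bessel_coeff \<mu> k > 0"
  unfolding bessel_coeff_def by (intro divide_pos_pos mult_pos_pos) auto

lemma bessel_coeff_Suc: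
  assumes "\<mu> > -1"
  shows "bessel_coeff \<mu> (Suc k) = bessel_coeff \<mu> k / ((real k + 1) * (real k + \<mu> + 1))"
proof -
  have "Gamma (real (Suc k) + \<mu> + 1) = (real k + \<mu> + 1) * Gamma (real k + \<mu> + 1)"
    using Gamma_plus1_real_pos[of "real k + \<mu> + 1"] assms by (simp add: add_ac)
  moreover have "Gamma (real k + \<mu> + 1) > 0" using assms by simp
  ultimately show ?thesis using assms unfolding bessel_coeff_def by (simp add: field_simps)
qed

lemma bessel_coeff_le:
  assumes "\<mu> > -1"
  shows "bessel_coeff \<mu> k \<le> bessel_coeff \<mu> 0 * inverse (fact k) * inverse (\<mu> + 1) ^ k"
proof (induction k)
  case (Suc k)
  have "(\<mu> + 1) * (real k + 1) \<le> (real k + 1) * (real k + \<mu> + 1)"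
    using assms by (simp add: algebra_simps)
  then have "bessel_coeff \<mu> (Suc k) \<le> bessel_coeff \<mu> k / ((\<mu> + 1) * (real k + 1))"
    using assms bessel_coeff_pos[OF assms, of k]
    by (simp add: bessel_coeff_Suc divide_left_mono)
  also have "\<dots> \<le> bessel_coeff \<mu> 0 * inverse (fact k) * inverse (\<mu> + 1) ^ k / ((\<mu> + 1) * (real k + 1))"
    using Suc.IH assms by (intro divide_right_mono) auto
  also have "\<dots> = bessel_coeff \<mu> 0 * inverse (fact (Suc k)) * inverse (\<mu> + 1) ^ Suc k"
    by (simp add: field_simps)
  finally show ?case .
qed simp

lemma summable_norm_bessel_series:
  assumes "\<mu> > -1"
  shows "summable (\<lambda>k. norm (y^k * bessel_coeff \<mu> k))"
proof (rule summable_comparison_test)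
  show "summable (\<lambda>k. bessel_coeff \<mu> 0 * (inverse (fact k) * (\<bar>y\<bar> / (\<mu> + 1)) ^ k))"
    by (intro summable_mult summable_exp)
  show "\<exists>N. \<forall>k\<ge>N. norm (norm (y^k * bessel_coeff \<mu> k))
          \<le> bessel_coeff \<mu> 0 * (inverse (fact k) * (\<bar>y\<bar> / (\<mu> + 1)) ^ k)"
  proof (intro exI allI impI)
    fix k
    have "norm (norm (y^k * bessel_coeff \<mu> k)) = \<bar>y\<bar>^k * bessel_coeff \<mu> k"
      using bessel_coeff_pos[OF assms] by (simp add: abs_mult power_abs less_imp_le)
    also have "\<dots> \<le> \<bar>y\<bar>^k * (bessel_coeff \<mu> 0 * inverse (fact k) * inverse (\<mu> + 1) ^ k)"
      by (intro mult_left_mono bessel_coeff_le assms) simp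
    finally show "norm (norm (y^k * bessel_coeff \<mu> k))
          \<le> bessel_coeff \<mu> 0 * (inverse (fact k) * (\<bar>y\<bar> / (\<mu> + 1)) ^ k)"
      by (simp add: field_simps)
  qed
qed

lemma sums_bessel_series:
  "\<mu> > -1 \<Longrightarrow> (\<lambda>k. y^k * bessel_coeff \<mu> k) sums bessel_series \<mu> y"
  unfolding bessel_series_def
  by (rule summable_sums, rule summable_norm_cancel, rule summable_norm_bessel_series)

lemma bessel_series_pos:
  assumes "\<mu> > -1" "y \<ge> 0"
  shows "bessel_series \<mu> y > 0"
  unfolding bessel_series_def
proof (rule suminf_pos2[where i=0])
  show "summable (\<lambda>k. y^k * bessel_coeff \<mu> k)"
    using sums_bessel_series[OF assms(1)] by (rule sums_summable)
  show "0 \<le> y^k * bessel_coeff \<mu> k" for k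
    using bessel_coeff_pos[OF assms(1), of k] assms(2) by simp
  show "0 < y^0 * bessel_coeff \<mu> 0"
    using bessel_coeff_pos[OF assms(1)] by simp
qed

lemma besselI_eq_bessel_series:
  assumes "x > 0" "\<mu> > -1"
  shows "besselI \<mu> x = (x/2) powr \<mu> * bessel_series \<mu> ((x/2)^2)"
proof -
  have "(x/2) powr (2 * real k + \<mu>) / (fact k * Gamma (real k + \<mu> + 1))
      = (x/2) powr \<mu> * (((x/2)^2)^k * bessel_coeff \<mu> k)" for k
  proof -
    have "(x/2) powr (2 * real k) = (x/2) ^ (2 * k)"
      using assms(1) powr_realpow[of "x/2" "2 * k"] by simp
    then show ?thesis by (simp add: powr_add bessel_coeff_def power_mult)
  qed
  then have "besselI \<mu> x = (\<Sum>k. (x/2) powr \<mu> * (((x/2)^2)^k * bessel_coeff \<mu> k))"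
    unfolding besselI_def by simp
  also have "\<dots> = (x/2) powr \<mu> * bessel_series \<mu> ((x/2)^2)"
    unfolding bessel_series_def
    by (rule suminf_mult[OF sums_summable[OF sums_bessel_series[OF assms(2)]]])
  finally show ?thesis .
qed

definition bessel_coeff_conv :: "real \<Rightarrow> real \<Rightarrow> nat \<Rightarrow> real" where
  "bessel_coeff_conv \<mu>1 \<mu>2 n = (\<Sum>i\<le>n. bessel_coeff \<mu>1 i * bessel_coeff \<mu>2 (n - i))"

lemma sums_bessel_series_mult:
  assumes "\<mu>1 > -1" "\<mu>2 > -1"
  shows "(\<lambda>n. y^n * bessel_coeff_conv \<mu>1 \<mu>2 n) sums (bessel_series \<mu>1 y * bessel_series \<mu>2 y)"
proof -
  have "(\<Sum>i\<le>n. (y^i * bessel_coeff \<mu>1 i) * (y^(n-i) * bessel_coeff \<mu>2 (n - i)))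
      = y^n * bessel_coeff_conv \<mu>1 \<mu>2 n" for n
    unfolding bessel_coeff_conv_def sum_distrib_left
    by (intro sum.cong refl) (auto simp: mult_ac simp flip: power_add)
  with Cauchy_product_sums[OF summable_norm_bessel_series[OF assms(1), of y]
    summable_norm_bessel_series[OF assms(2), of y]]
  show ?thesis
    unfolding bessel_series_def by simp
qed

lemma bessel_coeff_mult:
  assumes "\<mu>1 > -1" "\<mu>2 > -1" "i \<le> n"
  shows "bessel_coeff \<mu>1 i * bessel_coeff \<mu>2 (n - i)
     = of_nat (n choose i) * pochhammer (\<mu>2 + 1 + real n - real i) i * pochhammer (\<mu>1 + 1 + real i) (n - i)
       / (fact n * Gamma (real n + \<mu>1 + 1) * Gamma (real n + \<mu>2 + 1))"
proof -
  have Gamma1: "Gamma (real n + \<mu>1 + 1) = Gamma (real i + \<mu>1 + 1) * pochhammer (\<mu>1 + 1 + real i) (n - i)"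
    using Gamma_add_of_nat_real[of "real i + \<mu>1 + 1" "n - i"] assms by (simp add: add_ac)
  have Gamma2: "Gamma (real n + \<mu>2 + 1) = Gamma (real (n - i) + \<mu>2 + 1) * pochhammer (\<mu>2 + 1 + real n - real i) i"
    using Gamma_add_of_nat_real[of "real (n - i) + \<mu>2 + 1" i] assms by (simp add: algebra_simps)
  have "pochhammer (\<mu>1 + 1 + real i) (n - i) > 0" "pochhammer (\<mu>2 + 1 + real n - real i) i > 0"
    using assms by (auto intro!: pochhammer_pos)
  moreover have "Gamma (real i + \<mu>1 + 1) > 0" "Gamma (real (n - i) + \<mu>2 + 1) > 0"
    using assms by auto
  ultimately show ?thesis
    unfolding Gamma1 Gamma2 binomial_fact[OF assms(3)] bessel_coeff_def by (simp add: field_simps)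
qed

lemma bessel_coeff_conv_eq:
  assumes "\<mu>1 > -1" "\<mu>2 > -1"
  shows "bessel_coeff_conv \<mu>1 \<mu>2 n
    = pochhammer (real n + \<mu>1 + \<mu>2 + 1) n / (fact n * Gamma (real n + \<mu>1 + 1) * Gamma (real n + \<mu>2 + 1))"
proof -
  have "bessel_coeff_conv \<mu>1 \<mu>2 n
      = (\<Sum>i\<le>n. of_nat (n choose i) * pochhammer (\<mu>2 + 1 + real n - real i) i * pochhammer (\<mu>1 + 1 + real i) (n - i))
        / (fact n * Gamma (real n + \<mu>1 + 1) * Gamma (real n + \<mu>2 + 1))"
    unfolding bessel_coeff_conv_def sum_divide_distrib using assms by (intro sum.cong refl bessel_coeff_mult) auto
  also have "(\<Sum>i\<le>n. of_nat (n choose i) * pochhammer (\<mu>2 + 1 + real n - real i) i * pochhammer (\<mu>1 + 1 + real i) (n - i))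
      = pochhammer (real n + \<mu>1 + \<mu>2 + 1) n"
    by (subst pochhammer_binomial_sum_shifted) (simp add: algebra_simps)
  finally show ?thesis .
qed

lemma bessel_turan_coeff_eq:
  assumes "\<nu> > -1"
  shows "\<nu> * bessel_coeff_conv \<nu> (\<nu>+1) (Suc n) - bessel_coeff_conv (\<nu>+1) (\<nu>+1) n
           + bessel_coeff_conv \<nu> (\<nu>+2) n
         = pochhammer (real n + 2 * \<nu> + 3) n * (\<nu> * (2 * real n + 2 * \<nu> + 3) - (real n + 1))
           / (fact (Suc n) * (real n + \<nu> + 1)\<^sup>2 * (real n + \<nu> + 2) * (Gamma (real n + \<nu> + 1))\<^sup>2)"
proof -
  define q where "q = real n + \<nu> + 1"
  define G where "G = Gamma q"
  define m where "m = real n + 1"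
  define p where "p = pochhammer (real n + 2 * \<nu> + 3) n"
  have q: "q > 0" and G: "G > 0" and m: "m > 0"
    using assms by (auto simp: q_def G_def m_def)
  have Gamma_q1: "Gamma (q + 1) = q * G"
    using Gamma_plus1_real_pos[OF q] by (simp add: G_def)
  have Gamma_q2: "Gamma (q + 2) = (q + 1) * q * G"
    using Gamma_plus1_real_pos[of "q + 1"] q Gamma_q1 by (simp add: add.assoc)
  have conv1: "bessel_coeff_conv \<nu> (\<nu>+1) (Suc n) = p * (2 * q + 1) / (m * fact n * (q * G) * ((q + 1) * q * G))"
  proof -
    have "real (Suc n) + \<nu> + (\<nu> + 1) + 1 = real n + 2 * \<nu> + 3"
      "real (Suc n) + \<nu> + 1 = q + 1" "real (Suc n) + (\<nu> + 1) + 1 = q + 2"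
      "real n + 2 * \<nu> + 3 + real n = 2 * q + 1" "fact (Suc n) = m * fact n"
      by (simp_all add: q_def m_def)
    with bessel_coeff_conv_eq[of \<nu> "\<nu>+1" "Suc n"] assms show ?thesis
      by (simp only: pochhammer_Suc Gamma_q1 Gamma_q2 flip: p_def)
  qed
  have conv2: "bessel_coeff_conv (\<nu>+1) (\<nu>+1) n = p / (fact n * (q * G) * (q * G))"
  proof -
    have "real n + (\<nu> + 1) + (\<nu> + 1) + 1 = real n + 2 * \<nu> + 3"
      "real n + (\<nu> + 1) + 1 = q + 1"
      by (simp_all add: q_def)
    with bessel_coeff_conv_eq[of "\<nu>+1" "\<nu>+1" n] assms show ?thesis
      by (simp only: Gamma_q1 flip: p_def)
  qed
  have conv3: "bessel_coeff_conv \<nu> (\<nu>+2) n = p / (fact n * G * ((q + 1) * q * G))"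
  proof -
    have "real n + \<nu> + (\<nu> + 2) + 1 = real n + 2 * \<nu> + 3"
      "real n + \<nu> + 1 = q" "real n + (\<nu> + 2) + 1 = q + 2"
      by (simp_all add: q_def)
    with bessel_coeff_conv_eq[of \<nu> "\<nu>+2" n] assms show ?thesis
      by (simp only: Gamma_q2 flip: p_def G_def)
  qed
  have "\<nu> * bessel_coeff_conv \<nu> (\<nu>+1) (Suc n) - bessel_coeff_conv (\<nu>+1) (\<nu>+1) n
           + bessel_coeff_conv \<nu> (\<nu>+2) n
      = p * (\<nu> * (2 * q + 1) - m) / (m * fact n * q * q * (q + 1) * G * G)"
    unfolding conv1 conv2 conv3 using q G m
    by (simp add: divide_simps) (simp add: algebra_simps)
  also have "\<dots> = pochhammer (real n + 2 * \<nu> + 3) n * (\<nu> * (2 * real n + 2 * \<nu> + 3) - (real n + 1))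
           / (fact (Suc n) * (real n + \<nu> + 1)\<^sup>2 * (real n + \<nu> + 2) * (Gamma (real n + \<nu> + 1))\<^sup>2)"
    by (simp add: p_def q_def m_def G_def power2_eq_square algebra_simps)
  finally show ?thesis .
qed

lemma bessel_turan_coeff_nonneg:
  assumes "\<nu> \<ge> 1/2"
  shows "\<nu> * bessel_coeff_conv \<nu> (\<nu>+1) (Suc n) - bessel_coeff_conv (\<nu>+1) (\<nu>+1) n
           + bessel_coeff_conv \<nu> (\<nu>+2) n \<ge> 0"
proof -
  have "real n + 1 \<le> \<nu> * (2 * real n + 2 * \<nu> + 3)"
    using mult_right_mono[OF assms, of "2 * real n + 2 * \<nu> + 3"] assms by (simp add: algebra_simps)
  moreover have "pochhammer (real n + 2 * \<nu> + 3) n > 0" "Gamma (real n + \<nu> + 1) > 0"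
    using assms by (auto intro!: pochhammer_pos)
  ultimately show ?thesis
    using assms by (simp add: bessel_turan_coeff_eq)
qed

lemma bessel_series_turan_ineq:
  assumes "\<nu> \<ge> 1/2" "y \<ge> 0"
  shows "y * ((bessel_series (\<nu>+1) y)\<^sup>2 - bessel_series \<nu> y * bessel_series (\<nu>+2) y)
           < \<nu> * bessel_series \<nu> y * bessel_series (\<nu>+1) y"
proof -
  define f where "f = bessel_series \<nu> y"
  define g where "g = bessel_series (\<nu>+1) y"
  define h where "h = bessel_series (\<nu>+2) y"
  define a where "a = bessel_coeff_conv \<nu> (\<nu>+1)"
  define b where "b = bessel_coeff_conv (\<nu>+1) (\<nu>+1)"
  define c where "c = bessel_coeff_conv \<nu> (\<nu>+2)"
  have fg: "(\<lambda>n. y^n * a n) sums (f * g)" and gg: "(\<lambda>n. y^n * b n) sums (g * g)"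
    and fh: "(\<lambda>n. y^n * c n) sums (f * h)"
    unfolding a_def b_def c_def f_def g_def h_def using assms(1) by (simp_all add: sums_bessel_series_mult)
  have fg_tail: "(\<lambda>n. y^Suc n * a (Suc n)) sums (f * g - a 0)"
    using fg by (subst sums_Suc_iff) simp
  have "(\<lambda>n. \<nu> * (y^Suc n * a (Suc n)) - y * (y^n * b n) + y * (y^n * c n))
      sums (\<nu> * (f * g - a 0) - y * (g * g) + y * (f * h))"
    by (intro sums_add sums_diff sums_mult fg_tail gg fh)
  moreover have "\<nu> * (y^Suc n * a (Suc n)) - y * (y^n * b n) + y * (y^n * c n)
      = y^Suc n * (\<nu> * a (Suc n) - b n + c n)" for n
    by (simp add: algebra_simps)
  ultimately have combined: "(\<lambda>n. y^Suc n * (\<nu> * a (Suc n) - b n + c n))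
      sums (\<nu> * (f * g - a 0) - y * (g * g) + y * (f * h))"
    by simp
  have "0 \<le> y^Suc n * (\<nu> * a (Suc n) - b n + c n)" for n
    unfolding a_def b_def c_def using bessel_turan_coeff_nonneg[OF assms(1)] assms(2) by simp
  then have "0 \<le> \<nu> * (f * g - a 0) - y * (g * g) + y * (f * h)"
    using sums_zero combined by (rule sums_le)
  moreover have "\<nu> * a 0 > 0"
    using assms(1) bessel_coeff_pos[of \<nu> 0] bessel_coeff_pos[of "\<nu>+1" 0]
    by (simp add: a_def bessel_coeff_conv_def)
  ultimately have "y * (g * g - f * h) < \<nu> * f * g"
    by (simp add: algebra_simps)
  then show ?thesis
    by (simp add: f_def g_def h_def power2_eq_square)
qed

lemma bessel_coeff_recurrence:
  assumes "\<mu> > -1"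
  shows "bessel_coeff \<mu> (Suc n) - bessel_coeff (\<mu>+2) n = (\<mu>+1) * bessel_coeff (\<mu>+1) (Suc n)"
proof -
  define G where "G = Gamma (real n + \<mu> + 2)"
  have G: "G > 0" and n\<mu>: "real n + \<mu> + 2 > 0"
    using assms by (simp_all add: G_def)
  have "Gamma (real n + \<mu> + 3) = (real n + \<mu> + 2) * G"
    using Gamma_plus1_real_pos[OF n\<mu>] by (simp add: G_def add.assoc)
  then have coeffs: "bessel_coeff \<mu> (Suc n) = 1 / ((real n + 1) * fact n * G)"
    "bessel_coeff (\<mu>+2) n = 1 / (fact n * ((real n + \<mu> + 2) * G))"
    "bessel_coeff (\<mu>+1) (Suc n) = 1 / ((real n + 1) * fact n * ((real n + \<mu> + 2) * G))"
    by (simp_all add: bessel_coeff_def G_def algebra_simps)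
  show ?thesis
    unfolding coeffs using G n\<mu> by (simp add: divide_simps)
qed

lemma bessel_series_recurrence:
  assumes "\<mu> > -1"
  shows "bessel_series \<mu> y - y * bessel_series (\<mu>+2) y = (\<mu>+1) * bessel_series (\<mu>+1) y"
proof -
  have \<mu>1: "\<mu> + 1 > -1" and \<mu>2: "\<mu> + 2 > -1"
    using assms by simp_all
  have "(\<lambda>n. y^Suc n * bessel_coeff \<mu> (Suc n) - y * (y^n * bessel_coeff (\<mu>+2) n))
      sums (bessel_series \<mu> y - bessel_coeff \<mu> 0 - y * bessel_series (\<mu>+2) y)"
    using sums_bessel_series[OF assms, of y]
    by (intro sums_diff sums_mult sums_bessel_series \<mu>2) (subst sums_Suc_iff, simp)
  moreover have "y^Suc n * bessel_coeff \<mu> (Suc n) - y * (y^n * bessel_coeff (\<mu>+2) n)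
      = (\<mu>+1) * (y^Suc n * bessel_coeff (\<mu>+1) (Suc n))" for n
    using bessel_coeff_recurrence[OF assms, of n] by (simp add: algebra_simps flip: right_diff_distrib)
  ultimately have "(\<lambda>n. (\<mu>+1) * (y^Suc n * bessel_coeff (\<mu>+1) (Suc n)))
      sums (bessel_series \<mu> y - bessel_coeff \<mu> 0 - y * bessel_series (\<mu>+2) y)"
    by simp
  moreover have "(\<lambda>n. (\<mu>+1) * (y^Suc n * bessel_coeff (\<mu>+1) (Suc n)))
      sums ((\<mu>+1) * (bessel_series (\<mu>+1) y - bessel_coeff (\<mu>+1) 0))"
    using sums_bessel_series[OF \<mu>1, of y] by (intro sums_mult) (subst sums_Suc_iff, simp)
  ultimately have tails: "bessel_series \<mu> y - bessel_coeff \<mu> 0 - y * bessel_series (\<mu>+2) y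
      = (\<mu>+1) * (bessel_series (\<mu>+1) y - bessel_coeff (\<mu>+1) 0)"
    by (rule sums_unique2)
  have "Gamma (\<mu> + 1 + 1) = (\<mu> + 1) * Gamma (\<mu> + 1)"
    using assms by (intro Gamma_plus1_real_pos) simp
  moreover have "Gamma (\<mu> + 1) > 0"
    using assms by simp
  ultimately have "bessel_coeff \<mu> 0 = (\<mu>+1) * bessel_coeff (\<mu>+1) 0"
    using assms by (simp add: bessel_coeff_def add.assoc)
  with tails show ?thesis
    by (simp add: algebra_simps)
qed

lemma besselI_add_nat_eq_bessel_series:
  assumes "x > 0" "\<mu> > -1"
  shows "besselI (\<mu> + real m) x = (x/2) powr \<mu> * (x/2)^m * bessel_series (\<mu> + real m) ((x/2)^2)"
  using besselI_eq_bessel_series[of x "\<mu> + real m"] assms by (simp add: powr_add powr_realpow)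

lemma besselI_pos: "x > 0 \<Longrightarrow> \<mu> > -1 \<Longrightarrow> besselI \<mu> x > 0"
  by (simp add: besselI_eq_bessel_series bessel_series_pos)

lemma besselI_recurrence:
  assumes "x > 0" "\<mu> > -1"
  shows "besselI \<mu> x - besselI (\<mu>+2) x = 2 * (\<mu>+1) / x * besselI (\<mu>+1) x"
proof -
  define t where "t = x/2"
  have I1: "besselI (\<mu>+1) x = t powr \<mu> * t * bessel_series (\<mu>+1) (t^2)"
    using besselI_add_nat_eq_bessel_series[OF assms, of 1] by (simp add: t_def)
  have I2: "besselI (\<mu>+2) x = t powr \<mu> * t^2 * bessel_series (\<mu>+2) (t^2)"
    using besselI_add_nat_eq_bessel_series[OF assms, of 2] by (simp add: t_def)
  have "besselI \<mu> x - besselI (\<mu>+2) x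
      = t powr \<mu> * (bessel_series \<mu> (t^2) - t^2 * bessel_series (\<mu>+2) (t^2))"
    unfolding I2 besselI_eq_bessel_series[OF assms] t_def[symmetric] by (simp add: algebra_simps)
  also have "\<dots> = (\<mu>+1) / t * besselI (\<mu>+1) x"
    using assms unfolding I1 bessel_series_recurrence[OF assms(2)] by (simp add: t_def)
  finally show ?thesis
    by (simp add: t_def)
qed

lemma besselI_turan_type_ineq:
  assumes "\<nu> \<ge> 1/2" "x > 0"
  shows "(besselI (\<nu>+1) x)\<^sup>2 - besselI \<nu> x * besselI (\<nu>+2) x < 2 * \<nu> / x * besselI \<nu> x * besselI (\<nu>+1) x"
proof -
  define t where "t = x/2"
  define T where "T = t powr \<nu>"
  define f where "f = bessel_series \<nu> (t^2)"
  define g where "g = bessel_series (\<nu>+1) (t^2)"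
  define h where "h = bessel_series (\<nu>+2) (t^2)"
  have \<nu>: "\<nu> > -1" using assms(1) by simp
  have I: "besselI \<nu> x = T * f" "besselI (\<nu>+1) x = T * t * g" "besselI (\<nu>+2) x = T * t^2 * h"
    using besselI_eq_bessel_series[OF assms(2) \<nu>] besselI_add_nat_eq_bessel_series[OF assms(2) \<nu>, of 1]
      besselI_add_nat_eq_bessel_series[OF assms(2) \<nu>, of 2]
    by (simp_all add: t_def T_def f_def g_def h_def)
  have "T > 0" using assms(2) by (simp add: T_def t_def)
  have "(T * t * g)^2 - T * f * (T * t^2 * h) = T^2 * (t^2 * (g^2 - f * h))"
    by (simp add: algebra_simps power2_eq_square)
  also have "\<dots> < T^2 * (\<nu> * f * g)"
    using bessel_series_turan_ineq[OF assms(1), of "t^2"] \<open>T > 0\<close> by (simp add: f_def g_def h_def)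
  also have "\<dots> = 2 * \<nu> / x * (T * f) * (T * t * g)"
    using assms(2) by (simp add: t_def power2_eq_square field_simps)
  finally show ?thesis
    unfolding I .
qed

lemma Psi_sq_add_lt_one:
  assumes "\<nu> \<ge> 1/2" "x > 0"
  shows "(Psi \<nu> x)\<^sup>2 + 2 / x * Psi \<nu> x < 1"
proof -
  have \<nu>: "\<nu> > -1" using assms(1) by simp
  define A where "A = besselI \<nu> x"
  define B where "B = besselI (\<nu>+1) x"
  have "A > 0" using besselI_pos[OF assms(2) \<nu>] by (simp add: A_def)
  have "besselI (\<nu>+2) x = A - 2 * (\<nu>+1) / x * B"
    using besselI_recurrence[OF assms(2) \<nu>] by (simp add: A_def B_def)
  then have "B^2 - A * (A - 2 * (\<nu>+1) / x * B) < 2 * \<nu> / x * A * B"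
    using besselI_turan_type_ineq[OF assms] by (simp add: A_def B_def)
  then have "B^2 + 2 / x * A * B < A^2"
    by (simp add: algebra_simps add_divide_distrib power2_eq_square)
  then show ?thesis
    using \<open>A > 0\<close> by (simp add: Psi_def flip: A_def B_def) (simp add: field_simps power2_eq_square)
qed

theorem mainTheorem5:
  fixes \<nu> :: real
  assumes "\<nu> \<ge> 1/2"
  shows "(\<forall>x>0. (besselI (\<nu>+1) x)\<^sup>2 - besselI \<nu> x * besselI (\<nu>+2) x
              < 2 * \<nu> / x * besselI \<nu> x * besselI (\<nu>+1) x)
       \<and> (\<forall>K r. K > \<nu> + 1 \<longrightarrow> r > 0 \<longrightarrow> r = Psi \<nu> (2 * K * r)
              \<longrightarrow> r < sqrt (1 - 1 / K))"
proof (intro conjI allI impI)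
  show "(besselI (\<nu>+1) x)\<^sup>2 - besselI \<nu> x * besselI (\<nu>+2) x
          < 2 * \<nu> / x * besselI \<nu> x * besselI (\<nu>+1) x" if "x > 0" for x
    using besselI_turan_type_ineq[OF assms that] .
next
  fix K r :: real
  assume "K > \<nu> + 1" "r > 0" and fixed_point: "r = Psi \<nu> (2 * K * r)"
  then have "K > 0" using assms by simp
  have "r^2 + 2 / (2 * K * r) * r < 1"
    using Psi_sq_add_lt_one[OF assms, of "2 * K * r"] \<open>K > 0\<close> \<open>r > 0\<close>
    by (simp flip: fixed_point)
  then have "r^2 < 1 - 1 / K"
    using \<open>r > 0\<close> by simp
  then show "r < sqrt (1 - 1 / K)"
    by (rule real_less_rsqrt)
qed

end
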